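(* Consider an $N$-player game with player set $\mathcal{V}=\{1,\dots,N\}$, where player $i$ has strategy $x_i\in\mathbb{R}^{n_i}$, $n=\sum_{i=1}^N n_i$, $\bm{x}=\mathrm{col}(x_1,\dots,x_N)\in\mathbb{R}^n$, and cost functions $f_i:\mathbb{R}^n\to\mathbb{R}$. Suppose that for all $i\in\mathcal{V}$: (i) the strategy set is $\mathbb{R}^{n_i}$; (ii) $f_i(x_i,x_{-i})$ is convex and continuously differentiable in $x_i$ for every fixed $x_{-i}$; (iii) the pseudogradient $F(\bm{x})=\mathrm{col}(\nabla_1 f_1(\bm{x}),\dots,\nabla_N f_N(\bm{x}))$, with $\nabla_i f_i=\partial f_i/\partial x_i$, is strongly monotone: there is $\mu>0$ with $(\bm{x}-\bm{x}')^T(F(\bm{x})-F(\bm{x}'))\ge \mu\|\bm{x}-\bm{x}'\|^2$ for all $\bm{x},\bm{x}'\in\mathbb{R}^n$. Let $\bm{x}^*$ denote the (unique) Nash equilibrium, which satisfies $F(\bm{x}^* )=0$. Let the action of each player be governed by $$x_i^{(r_i)}+g_i(\xi_i,t)\theta_i=u_i,\qquad i\in\mathcal{V},$$ where $r_i\ge1$, $u_i\in\mathbb{R}^{n_i}$, $\xi_i=\mathrm{col}(x_i,\dot x_i,\dots,x_i^{(r_i-1)})$, $g_i:\mathbb{R}^{n_ir_i}\times[0,\infty)\to\mathbb{R}^{n_i\times m_i}$ is known, locally Lipschitz in $\xi_i$ uniformly in $t$ and continuous in $t$, and $\theta_i\in\mathbb{R}^{m_i}$ is a known constant vector. Let $c_0^i=1,c_1^i,\dots,c_{r_i-2}^i$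 be real numbers such that $s^{r_i-1}+c^i_{r_i-2}s^{r_i-2}+\cdots+c_1^is+c_0^i$ is Hurwitz, and define $$\gamma_i=\sum_{k=0}^{r_i-2}c_k^i x_i^{(k)}+x_i^{(r_i-1)},\qquad x_i^s=\mathrm{col}(\dot x_i,\dots,x_i^{(r_i-1)})\in\mathbb{R}^{n_i(r_i-1)},$$ $K_i^s x_i^s=\sum_{k=0}^{r_i-2}c_k^i x_i^{(k+1)}$, $\bm{\gamma}=\mathrm{col}(\gamma_1,\dots,\gamma_N)$, $\bm{x}^s=\mathrm{col}(x_1^s,\dots,x_N^s)$. Apply the control law $$u_i=-\nabla_i f_i(\gamma_i,\gamma_{-i})+g_i(\xi_i,t)\theta_i-K_i^s x_i^s,\qquad i\in\mathcal{V},$$ where $\nabla_i f_i(\gamma_i,\gamma_{-i})$ denotes $\nabla_i f_i$ evaluated at $\bm{\gamma}$. Then, in the coordinates $(\bm{\gamma},\bm{x}^s)$, the closed-loop system has the unique equilibrium $(\bm{x}^*,\bm{0}_{\sum_{i=1}^N n_i(r_i-1)})$, and this equilibrium is globally exponentially stable.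
   Context: $x_{-i}$ denotes $(x_1,\dots,x_{i-1},x_{i+1},\dots,x_N)$ and $\gamma_{-i}$ analogously. A Nash equilibrium is $\bm{x}^*$ with $f_i(x_i^*,x_{-i}^* )\le f_i(x_i,x_{-i}^* )$ for all $x_i$ and all $i$. In the $(\bm{\gamma},\bm{x}^s)$ coordinates the closed loop reads $\dot{\bm\gamma}=-F(\bm\gamma)$, $\dot x_i^s=A_i^K x_i^s-B_i^s\nabla_i f_i(\bm\gamma)$, where $A_i^K$ is the companion matrix (tensored with $I_{n_i}$) with last row $-c_0^i,\dots,-c_{r_i-2}^i$ and $B_i^s=\mathrm{col}(0,\dots,0,1)\otimes I_{n_i}$. *)

theory Defs
  imports "HOL-Analysis.Analysis"
begin

text \<open>The map
  pl :: 'n => nat assigns each coordinate to its owning player (in {1..N});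
  player i's block is the set of coordinates j with pl j = i, so n_i = card of it.
  A "derivative family" xi :: nat => real^'n stores xi k = x^(k) (componentwise;
  for coordinate j only orders k <= r (pl j) are meaningful).\<close>

definition upd :: "('n \<Rightarrow> nat) \<Rightarrow> nat \<Rightarrow> real^'n \<Rightarrow> real^'n \<Rightarrow> real^'n" where
  "upd pl i x y = (\<chi> j. if pl j = i then y $ j else x $ j)"

definition pseudograd :: "(nat \<Rightarrow> real^'n \<Rightarrow> real) \<Rightarrow> ('n \<Rightarrow> nat) \<Rightarrow> real^'n \<Rightarrow> real^'n" where
  "pseudograd f pl x = (\<chi> j. deriv (\<lambda>s. f (pl j) (x + s *\<^sub>R axis j 1)) 0)"

definition nash_eq :: "nat \<Rightarrow> (nat \<Rightarrow> real^'n \<Rightarrow> real) \<Rightarrow> ('n \<Rightarrow> nat) \<Rightarrow> real^'n \<Rightarrow> bool" where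
  "nash_eq N f pl xs \<longleftrightarrow> (\<forall>i\<in>{1..N}. \<forall>y. f i xs \<le> f i (upd pl i xs y))"

definition hurwitz_monic :: "nat \<Rightarrow> (nat \<Rightarrow> real) \<Rightarrow> bool" where
  "hurwitz_monic m a \<longleftrightarrow>
     (\<forall>z::complex. z ^ m + (\<Sum>k<m. complex_of_real (a k) * z ^ k) = 0 \<longrightarrow> Re z < 0)"

definition gam :: "('n \<Rightarrow> nat) \<Rightarrow> (nat \<Rightarrow> nat) \<Rightarrow> (nat \<Rightarrow> nat \<Rightarrow> real) \<Rightarrow> (nat \<Rightarrow> real^'n) \<Rightarrow> real^'n" where
  "gam pl r c xi = (\<chi> j. (\<Sum>k<r (pl j) - 1. c (pl j) k * xi k $ j) + xi (r (pl j) - 1) $ j)"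

definition Ks :: "('n \<Rightarrow> nat) \<Rightarrow> (nat \<Rightarrow> nat) \<Rightarrow> (nat \<Rightarrow> nat \<Rightarrow> real) \<Rightarrow> (nat \<Rightarrow> real^'n) \<Rightarrow> real^'n" where
  "Ks pl r c xi = (\<chi> j. \<Sum>k<r (pl j) - 1. c (pl j) k * xi (Suc k) $ j)"

text \<open>g_i(xi_i,t) theta_i : g i xi t j l is the (j,l) entry of the n_i x m_i matrix
  (rows j in block i, columns l < m_i).\<close>
definition gtheta :: "('n \<Rightarrow> nat) \<Rightarrow> (nat \<Rightarrow> nat) \<Rightarrow> (nat \<Rightarrow> (nat \<Rightarrow> real^'n) \<Rightarrow> real \<Rightarrow> 'n \<Rightarrow> nat \<Rightarrow> real)
     \<Rightarrow> (nat \<Rightarrow> nat \<Rightarrow> real) \<Rightarrow> (nat \<Rightarrow> real^'n) \<Rightarrow> real \<Rightarrow> real^'n" where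
  "gtheta pl m g \<theta> xi t = (\<chi> j. \<Sum>l<m (pl j). g (pl j) xi t j l * \<theta> (pl j) l)"

definition xi_dist :: "('n \<Rightarrow> nat) \<Rightarrow> (nat \<Rightarrow> nat) \<Rightarrow> nat \<Rightarrow> (nat \<Rightarrow> real^'n) \<Rightarrow> (nat \<Rightarrow> real^'n) \<Rightarrow> real" where
  "xi_dist pl r i xi xi' = sqrt (\<Sum>k<r i. \<Sum>j\<in>{j. pl j = i}. (xi k $ j - xi' k $ j)\<^sup>2)"

definition gmat_dist :: "('n \<Rightarrow> nat) \<Rightarrow> (nat \<Rightarrow> nat) \<Rightarrow> nat \<Rightarrow> ('n \<Rightarrow> nat \<Rightarrow> real) \<Rightarrow> ('n \<Rightarrow> nat \<Rightarrow> real) \<Rightarrow> real" where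
  "gmat_dist pl m i A B = sqrt (\<Sum>j\<in>{j. pl j = i}. \<Sum>l<m i. (A j l - B j l)\<^sup>2)"

definition cl_solution :: "(nat \<Rightarrow> real^'n \<Rightarrow> real) \<Rightarrow> ('n \<Rightarrow> nat) \<Rightarrow> (nat \<Rightarrow> nat) \<Rightarrow> (nat \<Rightarrow> nat \<Rightarrow> real)
     \<Rightarrow> (nat \<Rightarrow> nat) \<Rightarrow> (nat \<Rightarrow> (nat \<Rightarrow> real^'n) \<Rightarrow> real \<Rightarrow> 'n \<Rightarrow> nat \<Rightarrow> real) \<Rightarrow> (nat \<Rightarrow> nat \<Rightarrow> real)
     \<Rightarrow> (nat \<Rightarrow> real \<Rightarrow> real^'n) \<Rightarrow> bool" where
  "cl_solution f pl r c m g \<theta> X \<longleftrightarrow>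
     (\<forall>t\<ge>0. \<forall>j. \<forall>k<r (pl j).
        ((\<lambda>\<tau>. X k \<tau> $ j) has_real_derivative (X (Suc k) t $ j)) (at t within {0..})) \<and>
     (\<forall>t\<ge>0. (\<chi> j. X (r (pl j)) t $ j) + gtheta pl m g \<theta> (\<lambda>k. X k t) t
        = - pseudograd f pl (gam pl r c (\<lambda>k. X k t)) + gtheta pl m g \<theta> (\<lambda>k. X k t) t
          - Ks pl r c (\<lambda>k. X k t))"

definition xs_sq :: "('n::finite \<Rightarrow> nat) \<Rightarrow> (nat \<Rightarrow> nat) \<Rightarrow> (nat \<Rightarrow> real^'n) \<Rightarrow> real" where
  "xs_sq pl r xi = (\<Sum>j\<in>UNIV. \<Sum>k\<in>{1..<r (pl j)}. (xi k $ j)\<^sup>2)"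

definition coord_err :: "('n::finite \<Rightarrow> nat) \<Rightarrow> (nat \<Rightarrow> nat) \<Rightarrow> (nat \<Rightarrow> nat \<Rightarrow> real) \<Rightarrow> real^'n
     \<Rightarrow> (nat \<Rightarrow> real^'n) \<Rightarrow> real" where
  "coord_err pl r c xst xi = sqrt ((norm (gam pl r c xi - xst))\<^sup>2 + xs_sq pl r xi)"

end

theory Submission
  imports Defs "HOL-Computational_Algebra.Fundamental_Theorem_Algebra"
begin

text \<open>
  The control law cancels g_i theta_i, and differentiating gamma along the closed loop gives
  gamma' = - F(gamma): the gamma-coordinates follow the pseudogradient flow, and strong
  monotonicity makes exp (2 mu t) |gamma - x*|^2 nonincreasing, so gamma converges to x* at
  rate mu. In each coordinate the derivatives w_k = x^(k+1) satisfy p(D) w_0 = (gamma - x*)'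
  with the Hurwitz polynomial p = s^(r-1) + c_(r-2) s^(r-2) + ... + c_0. Splitting off a root,
  p = (s - lambda) q, the function q(D) w_0 - (gamma - x*) solves u' = lambda u + (exponentially
  small) and is bounded by variation of constants; induction on the degree of p gives
  exponential decay of all of x^s, with constants independent of the solution. A solution with
  constant (gamma, x^s) can only decay if it sits at (x*, 0).
\<close>

section \<open>Exponential bounds\<close>

definition exp_bounded :: "real \<Rightarrow> real \<Rightarrow> (real \<Rightarrow> 'a::real_normed_vector) \<Rightarrow> bool" where
  "exp_bounded C a u \<longleftrightarrow> (\<forall>t\<ge>0. norm (u t) \<le> C * exp (- a * t))"

lemma exp_bounded_nonneg: "exp_bounded C a u \<Longrightarrow> 0 \<le> C"
  unfolding exp_bounded_def by (metis exp_zero mult_1_right mult_zero_right norm_ge_zero order.trans order_refl)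

lemma exp_bounded_mono:
  assumes "exp_bounded C a u" "C \<le> C'" "a' \<le> a"
  shows "exp_bounded C' a' u"
  unfolding exp_bounded_def
proof (intro allI impI)
  fix t :: real assume t: "0 \<le> t"
  have "norm (u t) \<le> C * exp (- a * t)" using assms(1) t unfolding exp_bounded_def by blast
  also have "\<dots> \<le> C' * exp (- a' * t)"
    using exp_bounded_nonneg[OF assms(1)] assms(2,3) t by (intro mult_mono) (auto intro: mult_right_mono)
  finally show "norm (u t) \<le> C' * exp (- a' * t)" .
qed

lemma exp_bounded_zero: "0 \<le> C \<Longrightarrow> exp_bounded C a (\<lambda>_. 0)"
  unfolding exp_bounded_def by simp

lemma exp_bounded_add:
  "exp_bounded C a u \<Longrightarrow> exp_bounded D a v \<Longrightarrow> exp_bounded (C + D) a (\<lambda>t. u t + v t)"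
  unfolding exp_bounded_def by (auto intro: norm_triangle_le add_mono simp: distrib_right)

lemma exp_bounded_diff:
  "exp_bounded C a u \<Longrightarrow> exp_bounded D a v \<Longrightarrow> exp_bounded (C + D) a (\<lambda>t. u t - v t)"
  unfolding exp_bounded_def by (auto intro: norm_triangle_le_diff add_mono simp: distrib_right)

lemma exp_bounded_mult_left:
  fixes u :: "real \<Rightarrow> 'a::real_normed_algebra"
  shows "exp_bounded C a u \<Longrightarrow> exp_bounded (norm z * C) a (\<lambda>t. z * u t)"
  unfolding exp_bounded_def
  by (auto intro: order_trans[OF norm_mult_ineq] simp: mult.assoc mult_left_mono)

lemma exp_bounded_sum:
  assumes "finite I" "\<And>i. i \<in> I \<Longrightarrow> exp_bounded (C i) a (u i)"
  shows "exp_bounded (\<Sum>i\<in>I. C i) a (\<lambda>t. \<Sum>i\<in>I. u i t)"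
  using assms by (induction I rule: finite_induct) (auto intro: exp_bounded_zero exp_bounded_add)

lemma exp_decay_of_constant_eq_0:
  fixes E :: real
  assumes "0 < M" "0 < a" "0 \<le> E" and decay: "\<And>t. 0 \<le> t \<Longrightarrow> E \<le> M * exp (- a * t) * E"
  shows "E = 0"
proof -
  define t where "t = (\<bar>ln M\<bar> + 1) / a"
  have "0 \<le> t" unfolding t_def using assms by simp
  have "- a * t = - (\<bar>ln M\<bar> + 1)" unfolding t_def using assms by simp
  then have "M * exp (- a * t) = exp (ln M) * exp (- (\<bar>ln M\<bar> + 1))" using assms by simp
  also have "\<dots> = exp (ln M - (\<bar>ln M\<bar> + 1))"
    by (metis diff_conv_add_uminus exp_add)
  also have "\<dots> < 1" by simp
  finally show ?thesis
    using decay[OF \<open>0 \<le> t\<close>] \<open>0 \<le> E\<close> by (metis mult_less_cancel_right2 not_le order_antisym)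
qed

lemma finite_uniform_constants:
  fixes P :: "'i::finite \<Rightarrow> real \<Rightarrow> real \<Rightarrow> bool"
  assumes ex: "\<And>i. \<exists>M a. 0 < M \<and> 0 < a \<and> P i M a"
    and mono: "\<And>i M a M' a'. P i M a \<Longrightarrow> M \<le> M' \<Longrightarrow> a' \<le> a \<Longrightarrow> P i M' a'"
  obtains M a where "0 < M" "0 < a" "\<And>i. P i M a"
proof -
  obtain Mi ai where Mi: "\<And>i. 0 < Mi i" "\<And>i. 0 < ai i" "\<And>i. P i (Mi i) (ai i)"
    using ex by metis
  show thesis
  proof (rule that[of "Max (range Mi)" "Min (range ai)"])
    show "0 < Max (range Mi)" "0 < Min (range ai)"
      using Mi by (auto simp: Max_gr_iff Min_gr_iff)
    show "P i (Max (range Mi)) (Min (range ai))" for i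
      by (rule mono[OF Mi(3)]) auto
  qed
qed

lemma has_real_derivative_nonpos_imp_le_initial:
  fixes h :: "real \<Rightarrow> real"
  assumes deriv: "\<And>s. 0 \<le> s \<Longrightarrow> (h has_real_derivative h' s) (at s within {0..})"
    and nonpos: "\<And>s. 0 \<le> s \<Longrightarrow> h' s \<le> 0" and t: "0 \<le> t"
  shows "h t \<le> h 0"
proof (rule DERIV_nonpos_imp_decreasing_open[OF t])
  show "continuous_on {0..t} h"
    by (rule DERIV_continuous_on[of _ _ h']) (auto intro: has_field_derivative_subset[OF deriv])
  fix x :: real assume x: "0 < x" "x < t"
  have "(h has_real_derivative h' x) (at x within {0<..})"
    using deriv[of x] x by (auto elim: has_field_derivative_subset)
  then have "(h has_real_derivative h' x) (at x)"
    using x by (simp add: at_within_open[of x "{0<..}"])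
  then show "\<exists>y. (h has_real_derivative y) (at x) \<and> y \<le> 0"
    using nonpos[of x] x by auto
qed

lemma norm_diff_le_vector_derivative_bound:
  fixes \<phi> :: "real \<Rightarrow> 'a::real_normed_vector"
  assumes "\<And>s. s \<in> {0..t} \<Longrightarrow> (\<phi> has_vector_derivative \<phi>' s) (at s within {0..t})"
    and "\<And>s. s \<in> {0..t} \<Longrightarrow> norm (\<phi>' s) \<le> B" and "0 \<le> t"
  shows "norm (\<phi> t - \<phi> 0) \<le> B * t"
proof -
  have "norm (\<phi> t - \<phi> 0) \<le> B * norm (t - 0)"
    using assms unfolding has_vector_derivative_def
    by (intro differentiable_bound[of "{0..t}"])
       (auto simp: onorm_scaleR_left[OF bounded_linear_ident] onorm_id)
  then show ?thesis using assms(3) by simp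
qed

lemma linear_ode_variation_bound:
  fixes l :: complex and u u' v :: "real \<Rightarrow> complex"
  assumes du: "\<And>t. 0 \<le> t \<Longrightarrow> (u has_vector_derivative u' t) (at t within {0..})"
    and ode: "\<And>t. 0 \<le> t \<Longrightarrow> u' t = l * u t + v t"
    and v: "exp_bounded V b v" and c: "c \<le> b" "c \<le> - Re l" and t: "0 \<le> t"
  shows "norm (u t) \<le> exp (Re l * t) * norm (u 0) + t * V * exp (- c * t)"
proof -
  define E where "E s = exp (- (l * of_real s))" for s :: real
  define \<phi> where "\<phi> s = E s * u s" for s
  have normE: "norm (E s) = exp (- Re l * s)" for s
    unfolding E_def by simp
  have dE: "(E has_vector_derivative (E s * (- l))) (at s within S)" for s S
    unfolding E_def by (auto intro!: derivative_eq_intros has_vector_derivative_real_field)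
  have d\<phi>: "(\<phi> has_vector_derivative (E s * v s)) (at s within {0..t})" if "s \<in> {0..t}" for s
  proof -
    have "(\<phi> has_vector_derivative (E s * u' s + E s * (- l) * u s)) (at s within {0..})"
      unfolding \<phi>_def using that by (intro has_vector_derivative_mult dE du) auto
    moreover have "E s * u' s + E s * (- l) * u s = E s * v s"
      using ode[of s] that by (simp add: algebra_simps)
    ultimately show ?thesis by (auto intro: has_vector_derivative_within_subset)
  qed
  have "norm (E s * v s) \<le> V * exp ((- Re l - c) * t)" if "s \<in> {0..t}" for s
  proof -
    have "norm (E s * v s) \<le> exp (- Re l * s) * (V * exp (- b * s))"
      using v that unfolding exp_bounded_def by (simp add: norm_mult normE)
    also have "\<dots> = V * exp ((- Re l - b) * s)"
      by (simp add: algebra_simps flip: exp_add)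
    also have "\<dots> \<le> V * exp ((- Re l - c) * t)"
    proof -
      have "(- Re l - b) * s \<le> (- Re l - c) * s"
        using c that by (intro mult_right_mono) auto
      also have "\<dots> \<le> (- Re l - c) * t"
        using c that by (intro mult_left_mono) auto
      finally show ?thesis
        using exp_bounded_nonneg[OF v] by (intro mult_left_mono) auto
    qed
    finally show ?thesis .
  qed
  with d\<phi> have "norm (\<phi> t - \<phi> 0) \<le> V * exp ((- Re l - c) * t) * t"
    using t by (rule norm_diff_le_vector_derivative_bound)
  then have "norm (\<phi> t) \<le> norm (u 0) + t * V * exp ((- Re l - c) * t)"
    using norm_triangle_sub[of "\<phi> t" "\<phi> 0"] unfolding \<phi>_def E_def by (simp add: mult_ac)
  moreover have "norm (u t) = exp (Re l * t) * norm (\<phi> t)"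
    unfolding \<phi>_def by (simp add: norm_mult normE flip: exp_add)
  ultimately have "norm (u t) \<le> exp (Re l * t) * (norm (u 0) + t * V * exp ((- Re l - c) * t))"
    by (simp add: mult_left_mono)
  moreover have "exp (Re l * t) * exp ((- Re l - c) * t) = exp (- c * t)"
    by (simp add: algebra_simps flip: exp_add)
  ultimately show ?thesis
    by (simp add: distrib_left mult.left_commute)
qed

lemma linear_ode_exp_bounded:
  fixes l :: complex and u u' v :: "real \<Rightarrow> complex"
  assumes du: "\<And>t. 0 \<le> t \<Longrightarrow> (u has_vector_derivative u' t) (at t within {0..})"
    and ode: "\<And>t. 0 \<le> t \<Longrightarrow> u' t = l * u t + v t"
    and v: "exp_bounded V b v" and a: "0 < a" "2 * a \<le> b" "2 * a \<le> - Re l"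
  shows "exp_bounded ((1 + 1 / a) * (norm (u 0) + V)) a u"
  unfolding exp_bounded_def
proof (intro allI impI)
  fix t :: real assume t: "0 \<le> t"
  have V: "0 \<le> V" using exp_bounded_nonneg[OF v] .
  \<comment> \<open>the factor \<open>t\<close> from the variation of constants is absorbed by half of the rate\<close>
  have "a * t \<le> exp (a * t)" using exp_ge_add_one_self[of "a * t"] by linarith
  then have "t * exp (- a * t) \<le> 1 / a"
    using a by (simp add: field_simps exp_minus)
  then have te: "t * exp (- (2 * a) * t) \<le> exp (- a * t) / a"
    using mult_right_mono[of "t * exp (- a * t)" "1 / a" "exp (- a * t)"]
    by (simp add: algebra_simps flip: exp_add)
  have "norm (u t) \<le> exp (Re l * t) * norm (u 0) + t * V * exp (- (2 * a) * t)"
    by (rule linear_ode_variation_bound[OF du ode v a(2,3) t])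
  also have "\<dots> \<le> exp (- a * t) * norm (u 0) + V * (exp (- a * t) / a)"
  proof (intro add_mono mult_right_mono)
    show "exp (Re l * t) \<le> exp (- a * t)"
      using a t mult_right_mono[of "Re l" "- a" t] by simp
    show "t * V * exp (- (2 * a) * t) \<le> V * (exp (- a * t) / a)"
      using mult_left_mono[OF te V] by (simp add: mult_ac)
  qed (rule norm_ge_zero)
  also have "\<dots> \<le> (1 + 1 / a) * (norm (u 0) + V) * exp (- a * t)"
    using a V by (simp add: field_simps add_nonneg_nonneg)
  finally show "norm (u t) \<le> (1 + 1 / a) * (norm (u 0) + V) * exp (- a * t)" .
qed

lemma has_vector_derivative_cart_componentwise:
  fixes y :: "real \<Rightarrow> real^'n"
  assumes "\<And>j. ((\<lambda>\<tau>. y \<tau> $ j) has_real_derivative y' $ j) (at t within S)"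
  shows "(y has_vector_derivative y') (at t within S)"
  unfolding has_vector_derivative_def
proof (subst has_derivative_componentwise_within, intro ballI)
  fix i :: "real^'n" assume "i \<in> Basis"
  then obtain j where i: "i = axis j 1" by (auto simp: Basis_vec_def)
  show "((\<lambda>x. y x \<bullet> i) has_derivative (\<lambda>x. (x *\<^sub>R y') \<bullet> i)) (at t within S)"
    using assms[of j] unfolding i has_field_derivative_def
    by (simp add: inner_axis mult.commute[where b = "y' $ j"])
qed

lemma strongly_monotone_flow_exp_decay:
  fixes F :: "'a::real_inner \<Rightarrow> 'a" and y :: "real \<Rightarrow> 'a"
  assumes flow: "\<And>t. 0 \<le> t \<Longrightarrow> (y has_vector_derivative - F (y t)) (at t within {0..})"
    and strong: "\<And>x. \<mu> * (norm (x - xstar))\<^sup>2 \<le> (x - xstar) \<bullet> F x" and t: "0 \<le> t"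
  shows "norm (y t - xstar) \<le> exp (- \<mu> * t) * norm (y 0 - xstar)"
proof -
  define h where "h \<tau> = exp (2 * \<mu> * \<tau>) * ((y \<tau> - xstar) \<bullet> (y \<tau> - xstar))" for \<tau>
  define h' where "h' \<tau> = exp (2 * \<mu> * \<tau>) *
      (2 * \<mu> * ((y \<tau> - xstar) \<bullet> (y \<tau> - xstar)) - 2 * ((y \<tau> - xstar) \<bullet> F (y \<tau>)))" for \<tau>
  have "(h has_real_derivative h' s) (at s within {0..})" if "0 \<le> s" for s
    using flow[OF that] unfolding h_def h'_def has_vector_derivative_def has_field_derivative_def
    by (auto intro!: derivative_eq_intros simp: algebra_simps inner_commute)
  moreover have "h' s \<le> 0" for s
    using strong[of "y s"] unfolding h'_def by (simp add: power2_norm_eq_inner mult_nonneg_nonpos)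
  ultimately have "h t \<le> h 0"
    by (rule has_real_derivative_nonpos_imp_le_initial[OF _ _ t])
  then have "(exp (\<mu> * t) * norm (y t - xstar))\<^sup>2 \<le> (norm (y 0 - xstar))\<^sup>2"
    unfolding h_def by (simp add: power2_norm_eq_inner power_mult_distrib mult.assoc flip: exp_double)
  then have "exp (\<mu> * t) * norm (y t - xstar) \<le> norm (y 0 - xstar)"
    by (rule power2_le_imp_le) simp
  then show ?thesis
    by (simp add: exp_minus field_simps)
qed

section \<open>Linear chains with a Hurwitz characteristic polynomial\<close>

text \<open>With w k read as the k-th derivative of w 0, poly_D P w is P(d/dt) applied to w 0.\<close>

definition poly_D :: "complex poly \<Rightarrow> (nat \<Rightarrow> real \<Rightarrow> complex) \<Rightarrow> real \<Rightarrow> complex" where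
  "poly_D P w t = (\<Sum>k\<le>degree P. coeff P k * w k t)"

lemma poly_D_eq_sum:
  assumes "degree P \<le> n"
  shows "poly_D P w t = (\<Sum>k\<le>n. coeff P k * w k t)"
  unfolding poly_D_def
  by (rule sum.mono_neutral_left) (use assms in \<open>auto simp: coeff_eq_0\<close>)

lemma poly_D_monic:
  assumes "lead_coeff P = 1"
  shows "poly_D P w t = w (degree P) t + (\<Sum>k<degree P. coeff P k * w k t)"
  unfolding poly_D_def using assms by (simp flip: lessThan_Suc_atMost)

lemma poly_D_linear_factor:
  "poly_D ([:-l, 1:] * Q) w t = poly_D Q (\<lambda>k. w (Suc k)) t - l * poly_D Q w t"
proof -
  define n where "n = degree Q"
  have deg: "degree ([:-l, 1:] * Q) \<le> Suc n"
    unfolding n_def using degree_mult_le[of "[:-l, 1:]" Q] by simp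
  have "poly_D ([:-l, 1:] * Q) w t
      = (\<Sum>k\<le>Suc n. coeff (pCons 0 Q) k * w k t) - l * (\<Sum>k\<le>Suc n. coeff Q k * w k t)"
    unfolding poly_D_eq_sum[OF deg] by (simp add: algebra_simps sum_subtractf sum_distrib_left)
  also have "(\<Sum>k\<le>Suc n. coeff (pCons 0 Q) k * w k t) = poly_D Q (\<lambda>k. w (Suc k)) t"
    unfolding poly_D_def n_def by (subst sum.atMost_Suc_shift) simp
  also have "(\<Sum>k\<le>Suc n. coeff Q k * w k t) = poly_D Q w t"
    using poly_D_eq_sum[of Q "Suc n" w t] n_def by simp
  finally show ?thesis .
qed

lemma has_vector_derivative_poly_D:
  assumes "\<And>k. k \<le> degree P \<Longrightarrow> (w k has_vector_derivative w (Suc k) t) (at t within S)"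
  shows "(poly_D P w has_vector_derivative poly_D P (\<lambda>k. w (Suc k)) t) (at t within S)"
  unfolding poly_D_def[abs_def]
  by (rule has_vector_derivative_sum) (auto intro: has_vector_derivative_mult_right assms)

lemma norm_poly_D_le:
  assumes "\<And>k. k \<le> degree P \<Longrightarrow> norm (w k t) \<le> B"
  shows "norm (poly_D P w t) \<le> (\<Sum>k\<le>degree P. norm (coeff P k)) * B"
proof -
  have "norm (poly_D P w t) \<le> (\<Sum>k\<le>degree P. norm (coeff P k) * norm (w k t))"
    unfolding poly_D_def by (rule order_trans[OF norm_sum]) (simp add: norm_mult)
  also have "\<dots> \<le> (\<Sum>k\<le>degree P. norm (coeff P k) * B)"
    by (intro sum_mono mult_left_mono assms) auto
  finally show ?thesis by (simp add: sum_distrib_right)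
qed

lemma exp_bounded_poly_D_top:
  assumes Q: "lead_coeff Q = 1" and top: "exp_bounded A a (poly_D Q w)"
    and lower: "\<And>i. i < degree Q \<Longrightarrow> exp_bounded B a (w i)" and B: "0 \<le> B"
  shows "exp_bounded (A + (\<Sum>i\<le>degree Q. norm (coeff Q i)) * B) a (w (degree Q))"
proof -
  have "w (degree Q) = (\<lambda>t. poly_D Q w t - (\<Sum>i<degree Q. coeff Q i * w i t))"
    by (simp add: fun_eq_iff poly_D_monic[OF Q])
  then have "exp_bounded (A + (\<Sum>i<degree Q. norm (coeff Q i) * B)) a (w (degree Q))"
    using top lower by (simp only:) (intro exp_bounded_diff exp_bounded_sum exp_bounded_mult_left; simp)
  moreover have "(\<Sum>i<degree Q. norm (coeff Q i) * B) \<le> (\<Sum>i\<le>degree Q. norm (coeff Q i)) * B"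
    unfolding sum_distrib_right using B by (intro sum_mono2) auto
  ultimately show ?thesis
    by (elim exp_bounded_mono) auto
qed

text \<open>The forcing is v + e' where only v and e are known to decay: in the closed loop e is
  gamma_j - x*_j, whose derivative -F(gamma)_j is not controlled since F is not assumed Lipschitz.\<close>

definition forced_chain :: "complex poly \<Rightarrow> real \<Rightarrow> real \<Rightarrow> (nat \<Rightarrow> real \<Rightarrow> complex)
    \<Rightarrow> (real \<Rightarrow> complex) \<Rightarrow> (real \<Rightarrow> complex) \<Rightarrow> (real \<Rightarrow> complex) \<Rightarrow> bool" where
  "forced_chain P V b w v e e' \<longleftrightarrow>
     (\<forall>k<degree P. \<forall>t\<ge>0. (w k has_vector_derivative w (Suc k) t) (at t within {0..})) \<and>
     (\<forall>t\<ge>0. (e has_vector_derivative e' t) (at t within {0..})) \<and>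
     (\<forall>t\<ge>0. poly_D P w t = v t + e' t) \<and> exp_bounded V b v \<and> exp_bounded V b e"

definition chain_exp_stable :: "complex poly \<Rightarrow> real \<Rightarrow> real \<Rightarrow> real \<Rightarrow> bool" where
  "chain_exp_stable P b M a \<longleftrightarrow> (\<forall>V w v e e'. forced_chain P V b w v e e' \<longrightarrow>
     (\<forall>k<degree P. exp_bounded (M * ((\<Sum>i<degree P. norm (w i 0)) + V)) a (w k)))"

lemma chain_exp_stable_mono:
  assumes "chain_exp_stable P b M a" "M \<le> M'" "a' \<le> a"
  shows "chain_exp_stable P b M' a'"
  unfolding chain_exp_stable_def
proof (intro allI impI)
  fix V w v e e' k assume chain: "forced_chain P V b w v e e'" and k: "k < degree P"
  have "0 \<le> V" using chain exp_bounded_nonneg unfolding forced_chain_def by blast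
  then have "0 \<le> (\<Sum>i<degree P. norm (w i 0)) + V" by (simp add: sum_nonneg)
  moreover have "exp_bounded (M * ((\<Sum>i<degree P. norm (w i 0)) + V)) a (w k)"
    using assms(1) chain k unfolding chain_exp_stable_def by blast
  ultimately show "exp_bounded (M' * ((\<Sum>i<degree P. norm (w i 0)) + V)) a' (w k)"
    using assms(2,3) by (elim exp_bounded_mono) (auto intro: mult_right_mono)
qed

lemma forced_chain_factor_poly_D_exp_bounded:
  fixes l :: complex
  assumes chain: "forced_chain ([:-l, 1:] * Q) V b w v e e'" and Q: "lead_coeff Q = 1"
    and a: "0 < a" "2 * a \<le> b" "2 * a \<le> - Re l"
  defines "S \<equiv> (\<Sum>i\<le>degree Q. norm (w i 0)) + V"
    and "C \<equiv> (\<Sum>i\<le>degree Q. norm (coeff Q i))"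
  shows "exp_bounded (((1 + 1 / a) * (C + 2 + norm l) + 1) * S) a (poly_D Q w)"
proof -
  have deg: "degree ([:-l, 1:] * Q) = Suc (degree Q)"
    using Q by (subst degree_mult_eq) auto
  note chain = chain[unfolded forced_chain_def deg]
  have V: "0 \<le> V" "V \<le> S"
    using chain exp_bounded_nonneg unfolding S_def by (auto simp: sum_nonneg)
  have C: "0 \<le> C" unfolding C_def by (simp add: sum_nonneg)
  define u where "u t = poly_D Q w t - e t" for t
  \<comment> \<open>\<open>u\<close> solves a scalar first-order equation whose forcing no longer involves \<open>e'\<close>\<close>
  have du: "(u has_vector_derivative poly_D Q (\<lambda>k. w (Suc k)) t - e' t) (at t within {0..})"
    if "0 \<le> t" for t
    unfolding u_def[abs_def] using chain that
    by (intro has_vector_derivative_diff has_vector_derivative_poly_D) auto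
  have ode: "poly_D Q (\<lambda>k. w (Suc k)) t - e' t = l * u t + (v t + l * e t)" if "0 \<le> t" for t
    using chain that poly_D_linear_factor[of l Q w t] unfolding u_def by (auto simp: algebra_simps)
  have forcing: "exp_bounded ((1 + norm l) * V) b (\<lambda>t. v t + l * e t)"
    using exp_bounded_add[OF _ exp_bounded_mult_left] chain by (fastforce simp: distrib_right)
  have "exp_bounded ((1 + 1 / a) * (norm (u 0) + (1 + norm l) * V)) a u"
    by (rule linear_ode_exp_bounded[OF du ode forcing a])
  moreover have "exp_bounded V a e"
    using chain a by (auto elim: exp_bounded_mono)
  ultimately have bound: "exp_bounded ((1 + 1 / a) * (norm (u 0) + (1 + norm l) * V) + V) a (poly_D Q w)"
    using exp_bounded_add by (fastforce simp: u_def)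
  have "norm (w i 0) \<le> S" if "i \<le> degree Q" for i
    using member_le_sum[of i "{..degree Q}" "\<lambda>i. norm (w i 0)"] V that unfolding S_def by auto
  then have "norm (poly_D Q w 0) \<le> C * S"
    unfolding C_def by (rule norm_poly_D_le)
  then have "norm (u 0) \<le> C * S + S"
    using chain V norm_triangle_ineq4[of "poly_D Q w 0" "e 0"] unfolding u_def exp_bounded_def
    by force
  then have "norm (u 0) + (1 + norm l) * V \<le> (C + 2 + norm l) * S"
    using V mult_left_mono[OF V(2), of "1 + norm l"] by (simp add: algebra_simps)
  then have "(1 + 1 / a) * (norm (u 0) + (1 + norm l) * V) \<le> (1 + 1 / a) * ((C + 2 + norm l) * S)"
    using a by (intro mult_left_mono) auto
  moreover have "((1 + 1 / a) * (C + 2 + norm l) + 1) * S = (1 + 1 / a) * ((C + 2 + norm l) * S) + S"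
    by (simp add: algebra_simps)
  ultimately show ?thesis
    using V by (intro exp_bounded_mono[OF bound]) auto
qed

lemma forced_chain_factor_exp_bounded:
  fixes l :: complex
  assumes chain: "forced_chain ([:-l, 1:] * Q) V b w v e e'" and Q: "lead_coeff Q = 1"
    and a: "0 < a" "2 * a \<le> b" "2 * a \<le> - Re l"
    and stable: "chain_exp_stable Q a M' a'" and M': "0 \<le> M'" and k: "k \<le> degree Q"
  defines "C \<equiv> (\<Sum>i\<le>degree Q. norm (coeff Q i))"
    and "K \<equiv> (1 + 1 / a) * ((\<Sum>i\<le>degree Q. norm (coeff Q i)) + 2 + norm l) + 1"
  shows "exp_bounded ((K + (1 + C) * (M' * (1 + K))) * ((\<Sum>i\<le>degree Q. norm (w i 0)) + V))
           (min a a') (w k)"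
proof -
  define n where "n = degree Q"
  define S where "S = (\<Sum>i\<le>n. norm (w i 0)) + V"
  have deg: "degree ([:-l, 1:] * Q) = Suc n"
    using Q unfolding n_def by (subst degree_mult_eq) auto
  have V: "0 \<le> V" using chain exp_bounded_nonneg unfolding forced_chain_def by blast
  then have S: "0 \<le> S" unfolding S_def by (simp add: sum_nonneg)
  have C: "0 \<le> C" unfolding C_def by (simp add: sum_nonneg)
  have K: "K = (1 + 1 / a) * (C + 2 + norm l) + 1" "0 \<le> K"
    unfolding K_def C_def using a C by (simp_all add: add_nonneg_nonneg sum_nonneg)
  have u: "exp_bounded (K * S) a (poly_D Q w)"
    using forced_chain_factor_poly_D_exp_bounded[OF chain Q a] unfolding K(1) C_def S_def n_def .
  \<comment> \<open>the lower \<open>n\<close> derivatives form a chain for \<open>Q\<close>, forced by \<open>Q(D) w\<^sub>0\<close> itself\<close>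
  have "forced_chain Q (K * S) a w (poly_D Q w) (\<lambda>_. 0) (\<lambda>_. 0)"
    using chain u K(2) S unfolding forced_chain_def deg n_def by (auto intro: exp_bounded_zero)
  then have lower: "exp_bounded (M' * ((\<Sum>i<n. norm (w i 0)) + K * S)) a' (w i)" if "i < n" for i
    using stable that unfolding chain_exp_stable_def n_def by blast
  have "(\<Sum>i<n. norm (w i 0)) \<le> (\<Sum>i\<le>n. norm (w i 0))"
    by (rule sum_mono2) auto
  then have "(\<Sum>i<n. norm (w i 0)) + K * S \<le> (1 + K) * S"
    using V unfolding S_def by (simp add: algebra_simps)
  then have "M' * ((\<Sum>i<n. norm (w i 0)) + K * S) \<le> M' * (1 + K) * S"
    using M' by (simp add: mult_left_mono mult.assoc)
  then have lower: "exp_bounded (M' * (1 + K) * S) (min a a') (w i)" if "i < n" for i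
    using lower[OF that] by (elim exp_bounded_mono) auto
  show ?thesis
  proof (cases "k < n")
    case True
    have "M' * (1 + K) \<le> K + (1 + C) * (M' * (1 + K))"
      using K(2) C M' by (simp add: algebra_simps add_increasing)
    then show ?thesis
      using lower[OF True] S unfolding S_def n_def by (elim exp_bounded_mono) (auto intro: mult_right_mono)
  next
    case False
    then have "k = n" using k unfolding n_def by simp
    have "exp_bounded (K * S) (min a a') (poly_D Q w)"
      using u by (elim exp_bounded_mono) auto
    then have "exp_bounded (K * S + C * (M' * (1 + K) * S)) (min a a') (w n)"
      unfolding C_def n_def
      by (rule exp_bounded_poly_D_top[OF Q]) (use lower M' K(2) S in \<open>auto simp: n_def\<close>)
    moreover have "0 \<le> M' * (1 + K) * S" using M' K(2) S by simp
    ultimately show ?thesis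
      unfolding \<open>k = n\<close> S_def[symmetric] n_def[symmetric]
      by (elim exp_bounded_mono) (auto simp: algebra_simps)
  qed
qed

lemma chain_exp_stable_linear_factor:
  fixes l :: complex
  assumes l: "Re l < 0" and b: "0 < b" and Q: "lead_coeff Q = 1"
    and IH: "\<And>b. 0 < b \<Longrightarrow> \<exists>M a. 0 < M \<and> 0 < a \<and> chain_exp_stable Q b M a"
  shows "\<exists>M a. 0 < M \<and> 0 < a \<and> chain_exp_stable ([:-l, 1:] * Q) b M a"
proof -
  define a where "a = min (- Re l) b / 2"
  have a: "0 < a" "2 * a \<le> b" "2 * a \<le> - Re l"
    using l b unfolding a_def by auto
  obtain M' a' where M': "0 < M'" "0 < a'" and stable: "chain_exp_stable Q a M' a'"
    using IH[OF a(1)] by blast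
  define C where "C = (\<Sum>i\<le>degree Q. norm (coeff Q i))"
  define K where "K = (1 + 1 / a) * (C + 2 + norm l) + 1"
  have "degree ([:-l, 1:] * Q) = Suc (degree Q)"
    using Q by (subst degree_mult_eq) auto
  then have "chain_exp_stable ([:-l, 1:] * Q) b (K + (1 + C) * (M' * (1 + K))) (min a a')"
    using forced_chain_factor_exp_bounded[OF _ Q a stable] M'
    unfolding chain_exp_stable_def C_def K_def by (simp add: lessThan_Suc_atMost less_Suc_eq_le)
  moreover have "0 \<le> C" unfolding C_def by (simp add: sum_nonneg)
  then have "0 < K + (1 + C) * (M' * (1 + K))"
    unfolding K_def using a M' by (simp add: add_pos_nonneg)
  ultimately show ?thesis
    using a M' by (metis min_less_iff_conj)
qed

lemma hurwitz_chain_exp_stable: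
  assumes "lead_coeff P = 1" "\<forall>z. poly P z = 0 \<longrightarrow> Re z < 0" "0 < b"
  shows "\<exists>M a. 0 < M \<and> 0 < a \<and> chain_exp_stable P b M a"
  using assms
proof (induction "degree P" arbitrary: P b)
  case 0
  then show ?case unfolding chain_exp_stable_def by (metis less_nat_zero_code zero_less_one)
next
  case (Suc n)
  obtain l where "poly P l = 0"
    using fundamental_theorem_of_algebra constant_degree Suc.hyps(2) by (metis nat.distinct(1))
  then obtain Q where P: "P = [:-l, 1:] * Q"
    unfolding poly_eq_0_iff_dvd by (elim dvdE)
  have l: "Re l < 0" using Suc.prems(2) \<open>poly P l = 0\<close> by blast
  have Q: "lead_coeff Q = 1" "Q \<noteq> 0"
    using Suc.prems(1) P lead_coeff_mult[of "[:-l, 1:]" Q] by auto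
  have "degree P = Suc (degree Q)"
    unfolding P using Q(2) by (subst degree_mult_eq) auto
  then have "n = degree Q" using Suc.hyps(2) by simp
  moreover have "\<forall>z. poly Q z = 0 \<longrightarrow> Re z < 0"
    using Suc.prems(2) P by simp
  ultimately have "\<exists>M a. 0 < M \<and> 0 < a \<and> chain_exp_stable Q b' M a" if "0 < b'" for b'
    using Suc.hyps(1) Q(1) that by blast
  then show ?case
    unfolding P by (rule chain_exp_stable_linear_factor[OF l Suc.prems(3) Q(1)])
qed

definition monic_poly :: "nat \<Rightarrow> (nat \<Rightarrow> real) \<Rightarrow> complex poly" where
  "monic_poly p a = monom 1 p + (\<Sum>k<p. monom (complex_of_real (a k)) k)"

lemma coeff_monic_poly:
  "coeff (monic_poly p a) k = (if k = p then 1 else if k < p then complex_of_real (a k) else 0)"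
  unfolding monic_poly_def by (simp add: coeff_sum coeff_monom sum.delta)

lemma degree_monic_poly: "degree (monic_poly p a) = p"
  by (rule antisym) (auto intro: degree_le le_degree simp: coeff_monic_poly)

lemma lead_coeff_monic_poly: "lead_coeff (monic_poly p a) = 1"
  by (simp add: degree_monic_poly coeff_monic_poly)

lemma poly_monic_poly: "poly (monic_poly p a) z = z ^ p + (\<Sum>k<p. complex_of_real (a k) * z ^ k)"
  unfolding monic_poly_def by (simp add: poly_sum poly_monom)

lemma poly_D_monic_poly: "poly_D (monic_poly p a) w t = w p t + (\<Sum>k<p. complex_of_real (a k) * w k t)"
  unfolding poly_D_monic[OF lead_coeff_monic_poly] degree_monic_poly
  by (simp add: coeff_monic_poly)

lemma hurwitz_chains_uniformly_exp_stable:
  fixes pl :: "'n::finite \<Rightarrow> nat"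
  assumes hurwitz: "\<forall>j. hurwitz_monic (r (pl j) - 1) (c (pl j))" and \<mu>: "0 < \<mu>"
  obtains M a where "0 < M" "0 < a" "a \<le> \<mu>"
    "\<And>j. chain_exp_stable (monic_poly (r (pl j) - 1) (c (pl j))) \<mu> M a"
proof -
  obtain M a where M: "0 < M" "0 < a"
    and uniform: "\<And>j. chain_exp_stable (monic_poly (r (pl j) - 1) (c (pl j))) \<mu> M a"
  proof (rule finite_uniform_constants[where P = "\<lambda>j. chain_exp_stable (monic_poly (r (pl j) - 1) (c (pl j))) \<mu>"])
    show "\<exists>M a. 0 < M \<and> 0 < a \<and> chain_exp_stable (monic_poly (r (pl j) - 1) (c (pl j))) \<mu> M a" for j
      using hurwitz \<mu> unfolding hurwitz_monic_def
      by (intro hurwitz_chain_exp_stable lead_coeff_monic_poly) (auto simp: poly_monic_poly)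
  qed (auto elim: chain_exp_stable_mono intro: that)
  show thesis
  proof (rule that[of M "min a \<mu>"])
    show "chain_exp_stable (monic_poly (r (pl j) - 1) (c (pl j))) \<mu> M (min a \<mu>)" for j
      by (rule chain_exp_stable_mono[OF uniform]) auto
  qed (use M \<mu> in auto)
qed

section \<open>The closed-loop game dynamics\<close>

lemma upd_axis:
  assumes "pl j = i"
  shows "upd pl i x (x + s *\<^sub>R axis j 1) = x + s *\<^sub>R axis j 1"
  unfolding upd_def using assms by (auto simp: vec_eq_iff axis_def)

lemma nash_eq_imp_pseudograd_eq_0:
  assumes players: "\<forall>j. pl j \<in> {1..N}"
    and C1: "\<forall>i\<in>{1..N}. \<forall>x. \<exists>G. continuous_on UNIV G \<and>
               (\<forall>y. ((\<lambda>z. f i (upd pl i x z)) has_derivative (\<lambda>h. G y \<bullet> h)) (at y))"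
    and NE: "nash_eq N f pl xstar"
  shows "pseudograd f pl xstar = 0"
proof -
  have "pseudograd f pl xstar $ j = 0" for j
  proof -
    define i where "i = pl j"
    have i: "i \<in> {1..N}" using players i_def by simp
    obtain G where G: "\<And>y. ((\<lambda>z. f i (upd pl i xstar z)) has_derivative (\<lambda>h. G y \<bullet> h)) (at y)"
      using C1 i by blast
    define z where "z s = xstar + s *\<^sub>R axis j (1::real)" for s :: real
    have upd_z: "upd pl i xstar (z s) = z s" for s
      unfolding z_def by (rule upd_axis) (simp add: i_def)
    have "(z has_derivative (\<lambda>h. h *\<^sub>R axis j 1)) (at 0)"
      unfolding z_def by (auto intro!: derivative_eq_intros)
    from diff_chain_at[OF this G]
    have "((\<lambda>s. f i (z s)) has_real_derivative G (z 0) \<bullet> axis j 1) (at 0)"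
      unfolding has_field_derivative_def
      by (simp add: o_def upd_z inner_scaleR_right mult.commute[where b = "G (z 0) \<bullet> axis j 1"])
    moreover have "f i (z 0) \<le> f i (z s)" for s
      using NE i upd_z[of s] unfolding nash_eq_def by (metis z_def add_0_right scale_zero_left)
    ultimately have "deriv (\<lambda>s. f i (z s)) 0 = 0"
      by (metis DERIV_imp_deriv DERIV_local_min zero_less_one)
    then show ?thesis unfolding pseudograd_def z_def i_def by simp
  qed
  then show ?thesis by (simp add: vec_eq_iff)
qed

lemma closed_loop_top_derivative:
  assumes "cl_solution f pl r c m g \<theta> X" "0 \<le> t"
  shows "X (r (pl j)) t $ j = - pseudograd f pl (gam pl r c (\<lambda>k. X k t)) $ j
           - (\<Sum>k<r (pl j) - 1. c (pl j) k * X (Suc k) t $ j)"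
proof -
  have "(\<chi> j. X (r (pl j)) t $ j) + gtheta pl m g \<theta> (\<lambda>k. X k t) t
      = - pseudograd f pl (gam pl r c (\<lambda>k. X k t)) + gtheta pl m g \<theta> (\<lambda>k. X k t) t
        - Ks pl r c (\<lambda>k. X k t)"
    using assms unfolding cl_solution_def by blast
  then have "(\<chi> j. X (r (pl j)) t $ j) = - pseudograd f pl (gam pl r c (\<lambda>k. X k t)) - Ks pl r c (\<lambda>k. X k t)"
    by (simp add: algebra_simps eq_neg_iff_add_eq_0)
  from arg_cong[OF this, of "\<lambda>v. v $ j"] show ?thesis unfolding Ks_def by simp
qed

lemma closed_loop_gam_derivative:
  assumes sol: "cl_solution f pl r c m g \<theta> X" and r: "1 \<le> r (pl j)" and t: "0 \<le> t"
  shows "((\<lambda>\<tau>. gam pl r c (\<lambda>k. X k \<tau>) $ j) has_real_derivative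
           - pseudograd f pl (gam pl r c (\<lambda>k. X k t)) $ j) (at t within {0..})"
proof -
  define p where "p = r (pl j) - 1"
  have D: "((\<lambda>\<tau>. X k \<tau> $ j) has_real_derivative X (Suc k) t $ j) (at t within {0..})" if "k \<le> p" for k
    using sol t that r unfolding cl_solution_def p_def by force
  have "((\<lambda>\<tau>. (\<Sum>k<p. c (pl j) k * X k \<tau> $ j) + X p \<tau> $ j) has_real_derivative
      (\<Sum>k<p. c (pl j) k * X (Suc k) t $ j) + X (Suc p) t $ j) (at t within {0..})"
    using D by (intro DERIV_add DERIV_sum DERIV_cmult) auto
  moreover have "Suc p = r (pl j)" using r unfolding p_def by simp
  ultimately show ?thesis
    using closed_loop_top_derivative[OF sol t, of j] unfolding gam_def p_def by simp
qed

lemma closed_loop_gam_exp_decay: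
  assumes sol: "cl_solution f pl r c m g \<theta> X" and r: "\<forall>j. 1 \<le> r (pl j)"
    and mono: "\<forall>x x'. (x - x') \<bullet> (pseudograd f pl x - pseudograd f pl x') \<ge> \<mu> * (norm (x - x'))\<^sup>2"
    and eq: "pseudograd f pl xstar = 0" and t: "0 \<le> t"
  shows "norm (gam pl r c (\<lambda>k. X k t) - xstar) \<le> exp (- \<mu> * t) * norm (gam pl r c (\<lambda>k. X k 0) - xstar)"
proof (rule strongly_monotone_flow_exp_decay[where F = "pseudograd f pl"])
  fix s :: real assume "0 \<le> s"
  then show "((\<lambda>t. gam pl r c (\<lambda>k. X k t)) has_vector_derivative
      - pseudograd f pl (gam pl r c (\<lambda>k. X k s))) (at s within {0..})"
    using r by (intro has_vector_derivative_cart_componentwise)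
      (simp add: closed_loop_gam_derivative[OF sol])
next
  show "\<mu> * (norm (x - xstar))\<^sup>2 \<le> (x - xstar) \<bullet> pseudograd f pl x" for x
    using mono[rule_format, of x xstar] eq by simp
qed (rule t)

lemma closed_loop_forced_chain:
  assumes sol: "cl_solution f pl r c m g \<theta> X" and r: "\<forall>j. 1 \<le> r (pl j)"
    and mono: "\<forall>x x'. (x - x') \<bullet> (pseudograd f pl x - pseudograd f pl x') \<ge> \<mu> * (norm (x - x'))\<^sup>2"
    and eq: "pseudograd f pl xstar = 0"
  shows "forced_chain (monic_poly (r (pl j) - 1) (c (pl j))) (norm (gam pl r c (\<lambda>k. X k 0) - xstar)) \<mu>
           (\<lambda>k t. complex_of_real (X (Suc k) t $ j)) (\<lambda>_. 0)
           (\<lambda>t. complex_of_real (gam pl r c (\<lambda>k. X k t) $ j - xstar $ j))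
           (\<lambda>t. complex_of_real (- pseudograd f pl (gam pl r c (\<lambda>k. X k t)) $ j))"
  unfolding forced_chain_def degree_monic_poly exp_bounded_def
proof (intro conjI allI impI)
  fix k and t :: real assume "k < r (pl j) - 1" "0 \<le> t"
  then show "((\<lambda>t. complex_of_real (X (Suc k) t $ j)) has_vector_derivative
      complex_of_real (X (Suc (Suc k)) t $ j)) (at t within {0..})"
    using sol unfolding cl_solution_def by (intro has_vector_derivative_of_real) auto
next
  fix t :: real assume t: "0 \<le> t"
  show "((\<lambda>t. complex_of_real (gam pl r c (\<lambda>k. X k t) $ j - xstar $ j)) has_vector_derivative
      complex_of_real (- pseudograd f pl (gam pl r c (\<lambda>k. X k t)) $ j)) (at t within {0..})"
    using closed_loop_gam_derivative[OF sol _ t, of j] r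
    by (auto intro!: has_vector_derivative_of_real derivative_eq_intros)
  have "Suc (r (pl j) - 1) = r (pl j)" using r[rule_format, of j] by simp
  then show "poly_D (monic_poly (r (pl j) - 1) (c (pl j))) (\<lambda>k t. complex_of_real (X (Suc k) t $ j)) t
      = 0 + complex_of_real (- pseudograd f pl (gam pl r c (\<lambda>k. X k t)) $ j)"
    using closed_loop_top_derivative[OF sol t, of j] by (simp add: poly_D_monic_poly)
  show "norm (0::complex) \<le> norm (gam pl r c (\<lambda>k. X k 0) - xstar) * exp (- \<mu> * t)"
    by simp
  have "norm (gam pl r c (\<lambda>k. X k t) $ j - xstar $ j) \<le> norm (gam pl r c (\<lambda>k. X k t) - xstar)"
    using component_le_norm_cart[of "gam pl r c (\<lambda>k. X k t) - xstar" j] by simp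
  then show "norm (complex_of_real (gam pl r c (\<lambda>k. X k t) $ j - xstar $ j))
      \<le> norm (gam pl r c (\<lambda>k. X k 0) - xstar) * exp (- \<mu> * t)"
    using closed_loop_gam_exp_decay[OF sol r mono eq t]
    by (simp add: mult.commute del: of_real_diff flip: of_real_diff)
qed

lemma norm_gam_le_coord_err: "norm (gam pl r c xi - xstar) \<le> coord_err pl r c xstar xi"
  unfolding coord_err_def xs_sq_def
  by (rule real_le_rsqrt) (simp add: sum_nonneg)

lemma coord_err_nonneg: "0 \<le> coord_err pl r c xstar xi"
  using norm_gam_le_coord_err norm_ge_zero order_trans by blast

lemma abs_le_coord_err:
  fixes pl :: "'n::finite \<Rightarrow> nat"
  assumes "k \<in> {1..<r (pl j)}"
  shows "\<bar>xi k $ j\<bar> \<le> coord_err pl r c xstar xi"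
proof -
  have "(xi k $ j)\<^sup>2 \<le> (\<Sum>k\<in>{1..<r (pl j)}. (xi k $ j)\<^sup>2)"
    using assms by (intro member_le_sum) auto
  also have "\<dots> \<le> xs_sq pl r xi"
    unfolding xs_sq_def by (intro member_le_sum sum_nonneg) auto
  finally show ?thesis
    unfolding coord_err_def by (intro real_le_rsqrt) (simp add: add_increasing)
qed

lemma coord_err_le:
  fixes pl :: "'n::finite \<Rightarrow> nat"
  assumes "norm (gam pl r c xi - xstar) \<le> A" and "\<And>j k. k \<in> {1..<r (pl j)} \<Longrightarrow> \<bar>xi k $ j\<bar> \<le> B"
  shows "coord_err pl r c xstar xi \<le> A + (\<Sum>j\<in>UNIV. real (r (pl j) - 1)) * B"
proof -
  define I where "I = (SIGMA j:UNIV. {1..<r (pl j)})"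
  have "sqrt (xs_sq pl r xi) = L2_set (\<lambda>(j, k). xi k $ j) I"
    unfolding xs_sq_def L2_set_def I_def by (subst sum.Sigma) (auto simp: case_prod_beta)
  also have "\<dots> \<le> (\<Sum>(j, k)\<in>I. \<bar>xi k $ j\<bar>)"
    using L2_set_le_sum_abs[of "\<lambda>(j, k). xi k $ j" I] by (simp add: case_prod_beta)
  also have "\<dots> \<le> (\<Sum>(j, k)\<in>I. B)"
    unfolding I_def by (intro sum_mono) (auto intro: assms(2))
  also have "\<dots> = (\<Sum>j\<in>UNIV. real (r (pl j) - 1)) * B"
    unfolding I_def by (simp add: card_SigmaI)
  finally have "sqrt (xs_sq pl r xi) \<le> (\<Sum>j\<in>UNIV. real (r (pl j) - 1)) * B" .
  moreover have "coord_err pl r c xstar xi \<le> sqrt ((norm (gam pl r c xi - xstar))\<^sup>2) + sqrt (xs_sq pl r xi)"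
    unfolding coord_err_def by (rule sqrt_add_le_add_sqrt) (auto simp: xs_sq_def sum_nonneg)
  ultimately show ?thesis using assms(1) by simp
qed

lemma closed_loop_xs_exp_bound:
  assumes sol: "cl_solution f pl r c m g \<theta> X" and r: "\<forall>j. 1 \<le> r (pl j)"
    and mono: "\<forall>x x'. (x - x') \<bullet> (pseudograd f pl x - pseudograd f pl x') \<ge> \<mu> * (norm (x - x'))\<^sup>2"
    and eq: "pseudograd f pl xstar = 0"
    and stable: "chain_exp_stable (monic_poly (r (pl j) - 1) (c (pl j))) \<mu> M a" and M: "0 \<le> M"
    and k: "k \<in> {1..<r (pl j)}" and t: "0 \<le> t"
  shows "\<bar>X k t $ j\<bar> \<le> M * real (r (pl j)) * exp (- a * t) * coord_err pl r c xstar (\<lambda>k. X k 0)"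
proof -
  define p where "p = r (pl j) - 1"
  define E0 where "E0 = coord_err pl r c xstar (\<lambda>k. X k 0)"
  obtain i where i: "k = Suc i" "i < p" using k unfolding p_def by (cases k) auto
  have bound: "exp_bounded (M * ((\<Sum>i<p. norm (complex_of_real (X (Suc i) 0 $ j)))
      + norm (gam pl r c (\<lambda>k. X k 0) - xstar))) a (\<lambda>t. complex_of_real (X (Suc i) t $ j))"
    using stable closed_loop_forced_chain[OF sol r mono eq, of j] i(2)
    unfolding chain_exp_stable_def degree_monic_poly p_def by blast
  have sum: "(\<Sum>i<p. norm (complex_of_real (X (Suc i) 0 $ j)))
      + norm (gam pl r c (\<lambda>k. X k 0) - xstar) \<le> real (r (pl j)) * E0"
  proof -
    have "(\<Sum>i<p. \<bar>X (Suc i) 0 $ j\<bar>) \<le> (\<Sum>i<p. E0)"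
      unfolding E0_def by (intro sum_mono abs_le_coord_err) (auto simp: p_def)
    moreover have "norm (gam pl r c (\<lambda>k. X k 0) - xstar) \<le> E0"
      unfolding E0_def by (rule norm_gam_le_coord_err)
    moreover have "real (r (pl j)) = real p + 1" using r unfolding p_def by (simp add: of_nat_diff)
    ultimately show ?thesis by (simp add: algebra_simps)
  qed
  have "exp_bounded (M * real (r (pl j)) * E0) a (\<lambda>t. complex_of_real (X (Suc i) t $ j))"
    using exp_bounded_mono[OF bound mult_left_mono[OF sum M] order_refl] by (simp add: mult.assoc)
  then show ?thesis using t unfolding exp_bounded_def E0_def i(1) by (auto simp: mult_ac)
qed

lemma closed_loop_exp_stable:
  fixes pl :: "'n::finite \<Rightarrow> nat"
  assumes r: "\<forall>j. 1 \<le> r (pl j)" and hurwitz: "\<forall>j. hurwitz_monic (r (pl j) - 1) (c (pl j))"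
    and \<mu>: "0 < \<mu>"
    and mono: "\<forall>x x'. (x - x') \<bullet> (pseudograd f pl x - pseudograd f pl x') \<ge> \<mu> * (norm (x - x'))\<^sup>2"
    and eq: "pseudograd f pl xstar = 0"
  obtains M a where "0 < M" "0 < a"
    "\<And>X t. cl_solution f pl r c m g \<theta> X \<Longrightarrow> 0 \<le> t \<Longrightarrow>
       coord_err pl r c xstar (\<lambda>k. X k t) \<le> M * exp (- a * t) * coord_err pl r c xstar (\<lambda>k. X k 0)"
proof -
  obtain M a where M: "0 < M" "0 < a" "a \<le> \<mu>"
    and stable: "\<And>j. chain_exp_stable (monic_poly (r (pl j) - 1) (c (pl j))) \<mu> M a"
    using hurwitz_chains_uniformly_exp_stable[OF hurwitz \<mu>] by blast
  define R where "R = (\<Sum>j\<in>UNIV. real (r (pl j)))"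
  define D where "D = (\<Sum>j\<in>UNIV. real (r (pl j) - 1))"
  have R: "real (r (pl j)) \<le> R" for j
    unfolding R_def by (rule member_le_sum) auto
  have "0 \<le> R" "0 \<le> D" unfolding R_def D_def by (simp_all add: sum_nonneg)
  show thesis
  proof (rule that[of "1 + D * (M * R)" a])
    show "0 < 1 + D * (M * R)" "0 < a"
      using M \<open>0 \<le> R\<close> \<open>0 \<le> D\<close> by (simp_all add: add_pos_nonneg)
    fix X and t :: real
    assume sol: "cl_solution f pl r c m g \<theta> X" and t: "0 \<le> t"
    define E where "E = exp (- a * t) * coord_err pl r c xstar (\<lambda>k. X k 0)"
    have E: "0 \<le> E" unfolding E_def by (simp add: coord_err_nonneg)
    have "exp (- \<mu> * t) \<le> exp (- a * t)" using M t by (simp add: mult_right_mono)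
    then have "norm (gam pl r c (\<lambda>k. X k t) - xstar) \<le> E"
      using closed_loop_gam_exp_decay[OF sol r mono eq t] norm_gam_le_coord_err unfolding E_def
      by (meson exp_ge_zero mult_mono norm_ge_zero order_trans)
    moreover have "\<bar>X k t $ j\<bar> \<le> M * R * E" if "k \<in> {1..<r (pl j)}" for j k
    proof -
      have "\<bar>X k t $ j\<bar> \<le> M * real (r (pl j)) * E"
        using closed_loop_xs_exp_bound[OF sol r mono eq stable _ that t] M unfolding E_def
        by (simp add: mult.assoc)
      also have "\<dots> \<le> M * R * E"
        using M R[of j] E by (intro mult_right_mono mult_left_mono) auto
      finally show ?thesis .
    qed
    ultimately have "coord_err pl r c xstar (\<lambda>k. X k t) \<le> E + D * (M * R * E)"
      unfolding D_def by (rule coord_err_le)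
    then show "coord_err pl r c xstar (\<lambda>k. X k t)
        \<le> (1 + D * (M * R)) * exp (- a * t) * coord_err pl r c xstar (\<lambda>k. X k 0)"
      unfolding E_def by (simp add: algebra_simps)
  qed
qed

lemma gam_rest_state:
  assumes "1 \<le> r (pl j)" and "2 \<le> r (pl j) \<longrightarrow> c (pl j) 0 = 1"
  shows "gam pl r c (\<lambda>k. if k = 0 then xstar else 0) $ j = xstar $ j"
proof (cases "r (pl j) = 1")
  case False
  then have "(\<Sum>k<r (pl j) - 1. c (pl j) k * (if k = 0 then xstar else 0) $ j) = c (pl j) 0 * xstar $ j"
    using assms(1) by (subst sum.mono_neutral_right[of _ "{0}"]) auto
  then show ?thesis unfolding gam_def using False assms by simp
qed (simp add: gam_def)

lemma closed_loop_rest_state: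
  assumes r: "\<forall>j. 1 \<le> r (pl j)" and c0: "\<forall>j. 2 \<le> r (pl j) \<longrightarrow> c (pl j) 0 = 1"
    and eq: "pseudograd f pl xstar = 0"
  shows "cl_solution f pl r c m g \<theta> (\<lambda>k t. if k = 0 then xstar else 0)"
    and "gam pl r c (\<lambda>k. if k = 0 then xstar else 0) = xstar"
proof -
  show gam: "gam pl r c (\<lambda>k. if k = 0 then xstar else 0) = xstar"
    unfolding vec_eq_iff using r c0 by (blast intro: gam_rest_state)
  have "Ks pl r c (\<lambda>k. if k = 0 then xstar else 0) = 0"
    unfolding Ks_def by (simp add: vec_eq_iff)
  moreover have "(if r (pl j) = 0 then xstar else 0) $ j = 0" for j
    using r[rule_format, of j] by simp
  then have "(\<chi> j. (if r (pl j) = 0 then xstar else 0) $ j) = 0"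
    by (simp add: vec_eq_iff)
  ultimately show "cl_solution f pl r c m g \<theta> (\<lambda>k t. if k = 0 then xstar else 0)"
    unfolding cl_solution_def using gam eq by simp
qed

lemma closed_loop_constant_solution_at_rest:
  assumes "0 < M" "0 < a"
    and stable: "\<And>X t. cl_solution f pl r c m g \<theta> X \<Longrightarrow> 0 \<le> t \<Longrightarrow>
       coord_err pl r c xstar (\<lambda>k. X k t) \<le> M * exp (- a * t) * coord_err pl r c xstar (\<lambda>k. X k 0)"
  shows "\<forall>X. cl_solution f pl r c m g \<theta> X
           \<and> (\<forall>t\<ge>0. gam pl r c (\<lambda>k. X k t) = gam pl r c (\<lambda>k. X k 0)
                    \<and> (\<forall>j. \<forall>k\<in>{1..<r (pl j)}. X k t $ j = X k 0 $ j))
         \<longrightarrow> gam pl r c (\<lambda>k. X k 0) = xstar \<and> (\<forall>j. \<forall>k\<in>{1..<r (pl j)}. X k 0 $ j = 0)"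
proof (intro allI impI)
  fix X assume H: "cl_solution f pl r c m g \<theta> X
    \<and> (\<forall>t\<ge>0. gam pl r c (\<lambda>k. X k t) = gam pl r c (\<lambda>k. X k 0)
             \<and> (\<forall>j. \<forall>k\<in>{1..<r (pl j)}. X k t $ j = X k 0 $ j))"
  have same: "coord_err pl r c xstar (\<lambda>k. X k t) = coord_err pl r c xstar (\<lambda>k. X k 0)"
    if "0 \<le> t" for t
  proof -
    have "gam pl r c (\<lambda>k. X k t) = gam pl r c (\<lambda>k. X k 0)"
      and xs: "\<And>j k. k \<in> {1..<r (pl j)} \<Longrightarrow> X k t $ j = X k 0 $ j"
      using H that by blast+
    moreover have "xs_sq pl r (\<lambda>k. X k t) = xs_sq pl r (\<lambda>k. X k 0)"
      unfolding xs_sq_def by (intro sum.cong refl) (simp add: xs)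
    ultimately show ?thesis unfolding coord_err_def by simp
  qed
  have E0: "coord_err pl r c xstar (\<lambda>k. X k 0) = 0"
  proof (rule exp_decay_of_constant_eq_0[OF assms(1,2) coord_err_nonneg])
    fix t :: real assume "0 \<le> t"
    then show "coord_err pl r c xstar (\<lambda>k. X k 0)
        \<le> M * exp (- a * t) * coord_err pl r c xstar (\<lambda>k. X k 0)"
      using stable[OF conjunct1[OF H] \<open>0 \<le> t\<close>] same[OF \<open>0 \<le> t\<close>] by simp
  qed
  have "norm (gam pl r c (\<lambda>k. X k 0) - xstar) \<le> 0"
    using norm_gam_le_coord_err[of pl r c "\<lambda>k. X k 0" xstar] E0 by simp
  moreover have "\<bar>X k 0 $ j\<bar> \<le> 0" if "k \<in> {1..<r (pl j)}" for j k
    using abs_le_coord_err[of k r pl j "\<lambda>k. X k 0" c xstar] that E0 by simp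
  ultimately show "gam pl r c (\<lambda>k. X k 0) = xstar \<and> (\<forall>j. \<forall>k\<in>{1..<r (pl j)}. X k 0 $ j = 0)"
    by auto
qed

theorem theorem1:
  fixes N :: nat
    and pl :: "'n::finite \<Rightarrow> nat"
    and f :: "nat \<Rightarrow> real^'n \<Rightarrow> real"
    and r m :: "nat \<Rightarrow> nat"
    and c :: "nat \<Rightarrow> nat \<Rightarrow> real"
    and g :: "nat \<Rightarrow> (nat \<Rightarrow> real^'n) \<Rightarrow> real \<Rightarrow> 'n \<Rightarrow> nat \<Rightarrow> real"
    and \<theta> :: "nat \<Rightarrow> nat \<Rightarrow> real"
    and xstar :: "real^'n"
  assumes players: "\<forall>j. pl j \<in> {1..N}"
    and nonempty_blocks: "\<forall>i\<in>{1..N}. \<exists>j. pl j = i"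
    and convex: "\<forall>i\<in>{1..N}. \<forall>x. convex_on UNIV (\<lambda>y. f i (upd pl i x y))"
    and C1: "\<forall>i\<in>{1..N}. \<forall>x. \<exists>G. continuous_on UNIV G \<and>
               (\<forall>y. ((\<lambda>z. f i (upd pl i x z)) has_derivative (\<lambda>h. G y \<bullet> h)) (at y))"
    and strongly_monotone: "\<exists>\<mu>>0. \<forall>x x'.
               (x - x') \<bullet> (pseudograd f pl x - pseudograd f pl x') \<ge> \<mu> * (norm (x - x'))\<^sup>2"
    and NE: "nash_eq N f pl xstar"
    and r_pos: "\<forall>i\<in>{1..N}. r i \<ge> 1"
    and c0: "\<forall>i\<in>{1..N}. r i \<ge> 2 \<longrightarrow> c i 0 = 1"
    and hurwitz: "\<forall>i\<in>{1..N}. hurwitz_monic (r i - 1) (c i)"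
    and g_dep: "\<forall>i\<in>{1..N}. \<forall>xi xi' t. (\<forall>k<r i. \<forall>j. pl j = i \<longrightarrow> xi k $ j = xi' k $ j)
               \<longrightarrow> g i xi t = g i xi' t"
    and g_cont: "\<forall>i\<in>{1..N}. \<forall>xi j l. continuous_on {0..} (\<lambda>t. g i xi t j l)"
    and g_lip: "\<forall>i\<in>{1..N}. \<forall>xi0. \<exists>\<delta>>0. \<exists>L. \<forall>t\<ge>0. \<forall>xi xi'.
               xi_dist pl r i xi xi0 < \<delta> \<and> xi_dist pl r i xi' xi0 < \<delta> \<longrightarrow>
               gmat_dist pl m i (g i xi t) (g i xi' t) \<le> L * xi_dist pl r i xi xi'"
  shows
    \<comment> \<open>(x*, 0) is an equilibrium: the constant state x = x*, all derivatives 0 solves the closed loop\<close>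
    "cl_solution f pl r c m g \<theta> (\<lambda>k t. if k = 0 then xstar else 0)
     \<and> gam pl r c (\<lambda>k. if k = 0 then xstar else 0) = xstar
     \<comment> \<open>uniqueness: any solution with constant (gamma, x^s) sits at (x*, 0)\<close>
     \<and> (\<forall>X. cl_solution f pl r c m g \<theta> X
            \<and> (\<forall>t\<ge>0. gam pl r c (\<lambda>k. X k t) = gam pl r c (\<lambda>k. X k 0)
                     \<and> (\<forall>j. \<forall>k\<in>{1..<r (pl j)}. X k t $ j = X k 0 $ j))
          \<longrightarrow> gam pl r c (\<lambda>k. X k 0) = xstar \<and> (\<forall>j. \<forall>k\<in>{1..<r (pl j)}. X k 0 $ j = 0))
     \<comment> \<open>global exponential stability in the (gamma, x^s) coordinates\<close>
     \<and> (\<exists>M a. M > 0 \<and> a > 0 \<and> (\<forall>X. cl_solution f pl r c m g \<theta> X \<longrightarrow>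
          (\<forall>t\<ge>0. coord_err pl r c xstar (\<lambda>k. X k t)
                   \<le> M * exp (- a * t) * coord_err pl r c xstar (\<lambda>k. X k 0))))"
proof -
  have r: "\<forall>j. 1 \<le> r (pl j)" and c0': "\<forall>j. 2 \<le> r (pl j) \<longrightarrow> c (pl j) 0 = 1"
    and hw: "\<forall>j. hurwitz_monic (r (pl j) - 1) (c (pl j))"
    using players r_pos c0 hurwitz by blast+
  have eq: "pseudograd f pl xstar = 0"
    by (rule nash_eq_imp_pseudograd_eq_0[OF players C1 NE])
  obtain \<mu> where \<mu>: "0 < \<mu>"
    and mono: "\<forall>x x'. (x - x') \<bullet> (pseudograd f pl x - pseudograd f pl x') \<ge> \<mu> * (norm (x - x'))\<^sup>2"
    using strongly_monotone by blast
  obtain M a where M: "0 < M" "0 < a"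
    and stable: "\<And>X t. cl_solution f pl r c m g \<theta> X \<Longrightarrow> 0 \<le> t \<Longrightarrow>
       coord_err pl r c xstar (\<lambda>k. X k t) \<le> M * exp (- a * t) * coord_err pl r c xstar (\<lambda>k. X k 0)"
    using closed_loop_exp_stable[OF r hw \<mu> mono eq, where m = m and g = g and \<theta> = \<theta>] by blast
  note rest = closed_loop_rest_state[where pl = pl and r = r and c = c and f = f and xstar = xstar,
      OF r c0' eq]
  show ?thesis
    by (intro conjI rest closed_loop_constant_solution_at_rest[OF M stable]
        exI[of _ M] exI[of _ a] M allI impI stable)
qed

end
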